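(* Let $p$ be a prime, let $A\in \mathbb{Z}^{m\times n}$ be a matrix all of whose (square) subdeterminants belong to $\{0\}\cup \{\pm p^k:k\in \mathbb{Z}_{\ge 0}\}$, and let $b\in \mathbb{Z}^m$. Then $Ax\leq b$ is totally dual $p$-adic.
   Context: A $p$-adic rational is a number $a/p^k$ with $a,k\in\mathbb{Z}$, $k\ge0$; a vector is $p$-adic if all entries are $p$-adic rationals. A system $Ax\le b$ with integral $A,b$ is totally dual $p$-adic if for every $w\in\mathbb{Z}^n$ for which $\min\{b^\top y: A^\top y=w,\ y\ge \mathbf{0}\}$ has an optimal solution, it has a $p$-adic optimal solution. *)

theory Defs
  imports "Jordan_Normal_Form.Determinant" "Jordan_Normal_Form.DL_Submatrix"
begin

definition p_adic :: "int \<Rightarrow> real \<Rightarrow> bool" where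
  "p_adic p x \<longleftrightarrow> (\<exists>(a::int) (k::nat). x = real_of_int a / real_of_int p ^ k)"

definition p_adic_vec :: "int \<Rightarrow> real vec \<Rightarrow> bool" where
  "p_adic_vec p y \<longleftrightarrow> (\<forall>i < dim_vec y. p_adic p (y $ i))"

definition subdets_p_power :: "int \<Rightarrow> int mat \<Rightarrow> bool" where
  "subdets_p_power p A \<longleftrightarrow>
     (\<forall>I J. I \<subseteq> {0..<dim_row A} \<longrightarrow> J \<subseteq> {0..<dim_col A} \<longrightarrow> card I = card J \<longrightarrow>
        (let d = det (submatrix A I J) in d = 0 \<or> (\<exists>k::nat. d = p ^ k \<or> d = - (p ^ k))))"

definition dual_feasible :: "int mat \<Rightarrow> int vec \<Rightarrow> real vec \<Rightarrow> bool" where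
  "dual_feasible A w y \<longleftrightarrow>
     y \<in> carrier_vec (dim_row A) \<and> (\<forall>i < dim_row A. y $ i \<ge> 0) \<and>
     transpose_mat (map_mat real_of_int A) *\<^sub>v y = map_vec real_of_int w"

definition dual_optimal :: "int mat \<Rightarrow> int vec \<Rightarrow> int vec \<Rightarrow> real vec \<Rightarrow> bool" where
  "dual_optimal A b w y \<longleftrightarrow>
     dual_feasible A w y \<and>
     (\<forall>y'. dual_feasible A w y' \<longrightarrow> map_vec real_of_int b \<bullet> y \<le> map_vec real_of_int b \<bullet> y')"

definition totally_dual_p_adic :: "int \<Rightarrow> int mat \<Rightarrow> int vec \<Rightarrow> bool" where
  "totally_dual_p_adic p A b \<longleftrightarrow>
     (\<forall>w \<in> carrier_vec (dim_col A).
        (\<exists>y. dual_optimal A b w y) \<longrightarrow> (\<exists>y. dual_optimal A b w y \<and> p_adic_vec p y))"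

end

theory Submission
  imports Defs
begin

(* Among the optimal dual solutions pick one, y, of minimal support S. The rows of A indexed
   by S are linearly independent: a nonzero d supported on S with A^T d = 0 is a direction along
   which y stays feasible in both directions for small steps, so optimality forces b^T d = 0, and
   moving along d until some coordinate of y on S drops to zero yields an optimal solution of
   smaller support. Hence some square submatrix A_(S,J) is nonsingular, and y restricted to S
   solves the square system A_(S,J)^T y_S = w_J. By Cramer's rule every entry of y times
   det A_(S,J) is an integer, and det A_(S,J) = +-p^k by hypothesis, so y is p-adic. *)

definition independent_columns :: "('i \<Rightarrow> 'j \<Rightarrow> 'a::field) \<Rightarrow> 'i set \<Rightarrow> 'j set \<Rightarrow> bool" where
  "independent_columns a I J \<longleftrightarrow> (\<forall>v. (\<forall>i\<in>I. (\<Sum>j\<in>J. a i j * v j) = 0) \<longrightarrow> (\<forall>j\<in>J. v j = 0))"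

lemma independent_columns_eliminate:
  fixes a :: "'i \<Rightarrow> 'j \<Rightarrow> 'a::field"
  assumes "finite J" "j0 \<in> J" "a i j0 \<noteq> 0" and indep: "independent_columns a (insert i I) J"
  shows "independent_columns (\<lambda>i' j. a i' j - a i' j0 * a i j / a i j0) I (J - {j0})"
  unfolding independent_columns_def
proof (intro allI impI)
  let ?J' = "J - {j0}"
  fix v assume v: "\<forall>i'\<in>I. (\<Sum>j\<in>?J'. (a i' j - a i' j0 * a i j / a i j0) * v j) = 0"
  define v0 where "v0 = - (\<Sum>j\<in>?J'. a i j * v j) / a i j0"
  define v' where "v' = v(j0 := v0)"
  have sum_v': "(\<Sum>j\<in>J. f j * v' j) = f j0 * v0 + (\<Sum>j\<in>?J'. f j * v j)" for f
  proof -
    have "(\<Sum>j\<in>J. f j * v' j) = f j0 * v' j0 + (\<Sum>j\<in>?J'. f j * v' j)"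
      using assms(1,2) by (simp add: sum.remove)
    also have "(\<Sum>j\<in>?J'. f j * v' j) = (\<Sum>j\<in>?J'. f j * v j)"
      by (rule sum.cong) (auto simp: v'_def)
    finally show ?thesis
      by (simp add: v'_def)
  qed
  have "\<forall>i'\<in>insert i I. (\<Sum>j\<in>J. a i' j * v' j) = 0"
  proof
    fix i' assume "i' \<in> insert i I"
    then consider "i' = i" | "i' \<in> I" by blast
    then show "(\<Sum>j\<in>J. a i' j * v' j) = 0"
    proof cases
      case 1
      then show ?thesis
        using assms(3) by (simp add: sum_v' v0_def)
    next
      case 2
      have "(\<Sum>j\<in>?J'. (a i' j - a i' j0 * a i j / a i j0) * v j) = a i' j0 * v0 + (\<Sum>j\<in>?J'. a i' j * v j)"
        by (simp add: v0_def algebra_simps sum_subtractf sum_distrib_left sum_divide_distrib)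
      then show ?thesis
        using v 2 by (simp add: sum_v')
    qed
  qed
  then have "\<forall>j\<in>J. v' j = 0"
    using indep by (simp add: independent_columns_def)
  then show "\<forall>j\<in>?J'. v j = 0"
    unfolding v'_def by (metis DiffE fun_upd_other singletonI)
qed

lemma independent_columns_card_le:
  fixes a :: "'i \<Rightarrow> 'j \<Rightarrow> 'a::field"
  assumes "finite I" "finite J" "independent_columns a I J"
  shows "card J \<le> card I"
  using assms
proof (induction I arbitrary: J a rule: finite_induct)
  case empty
  have "J = {}"
    using empty.prems(2)[unfolded independent_columns_def, THEN spec, of "\<lambda>_. 1"] by auto
  then show ?case by simp
next
  case (insert i I)
  show ?case
  proof (cases "\<forall>j\<in>J. a i j = 0")
    case True
    then have "independent_columns a I J"
      using insert.prems(2) by (auto simp: independent_columns_def)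
    then have "card J \<le> card I"
      using insert.IH insert.prems(1) by blast
    then show ?thesis
      using insert.hyps by simp
  next
    case False
    then obtain j0 where j0: "j0 \<in> J" "a i j0 \<noteq> 0" by blast
    have "independent_columns (\<lambda>i' j. a i' j - a i' j0 * a i j / a i j0) I (J - {j0})"
      by (rule independent_columns_eliminate[OF insert.prems(1) j0 insert.prems(2)])
    then have "card (J - {j0}) \<le> card I"
      by (rule insert.IH[rotated]) (use insert.prems(1) in simp)
    then show ?thesis
      using insert.hyps insert.prems(1) j0(1) by (simp add: card_Diff_singleton)
  qed
qed

lemma independent_columns_extend:
  fixes a :: "'i \<Rightarrow> 'j \<Rightarrow> 'a::field"
  assumes fin: "finite I" "finite J"
    and rows: "independent_columns (\<lambda>j i. a i j) C I"
    and cols: "independent_columns a I J" and "J \<subseteq> C" and "card J < card I"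
  shows "\<exists>c\<in>C - J. independent_columns a I (insert c J)"
proof -
  have "\<not> independent_columns (\<lambda>j i. a i j) J I"
    using independent_columns_card_le[OF fin(2,1), of "\<lambda>j i. a i j"] \<open>card J < card I\<close> by (meson leD)
  then obtain u where u_J: "\<forall>j\<in>J. (\<Sum>i\<in>I. a i j * u i) = 0" and "\<exists>i\<in>I. u i \<noteq> 0"
    unfolding independent_columns_def by blast
  then obtain c where "c \<in> C" and u_c: "(\<Sum>i\<in>I. a i c * u i) \<noteq> 0"
    using rows unfolding independent_columns_def by blast
  with u_J \<open>J \<subseteq> C\<close> have c: "c \<in> C - J" by blast
  have "independent_columns a I (insert c J)"
    unfolding independent_columns_def
  proof (intro allI impI)
    fix v assume v: "\<forall>i\<in>I. (\<Sum>j\<in>insert c J. a i j * v j) = 0"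
    \<comment> \<open>Combining the equations with the weights \<open>u\<close> eliminates all unknowns but \<open>v c\<close>.\<close>
    have "(\<Sum>i\<in>I. \<Sum>j\<in>J. u i * (a i j * v j)) = (\<Sum>j\<in>J. v j * (\<Sum>i\<in>I. a i j * u i))"
      by (subst sum.swap) (simp add: sum_distrib_left mult_ac)
    also have "\<dots> = 0"
      using u_J by simp
    finally have J_part: "(\<Sum>i\<in>I. \<Sum>j\<in>J. u i * (a i j * v j)) = 0" .
    have "0 = (\<Sum>i\<in>I. u i * (\<Sum>j\<in>insert c J. a i j * v j))"
      using v by simp
    also have "\<dots> = v c * (\<Sum>i\<in>I. a i c * u i) + (\<Sum>i\<in>I. \<Sum>j\<in>J. u i * (a i j * v j))"
      using fin(2) c by (simp add: distrib_left sum.distrib sum_distrib_left sum_distrib_right mult_ac)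
    also have "\<dots> = v c * (\<Sum>i\<in>I. a i c * u i)"
      using J_part by simp
    finally have "v c = 0"
      using u_c by simp
    have "\<forall>i\<in>I. (\<Sum>j\<in>J. a i j * v j) = 0"
      using v \<open>v c = 0\<close> fin(2) c by simp
    then have "\<forall>j\<in>J. v j = 0"
      using cols unfolding independent_columns_def by blast
    with \<open>v c = 0\<close> show "\<forall>j\<in>insert c J. v j = 0" by simp
  qed
  with c show ?thesis by blast
qed

lemma independent_rows_imp_square_subsystem:
  fixes a :: "'i \<Rightarrow> 'j \<Rightarrow> 'a::field"
  assumes "finite I" "finite C" "independent_columns (\<lambda>j i. a i j) C I"
  shows "\<exists>J\<subseteq>C. card J = card I \<and> independent_columns a I J"
proof -
  let ?P = "\<lambda>J. J \<subseteq> C \<and> independent_columns a I J"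
  have "?P {}"
    by (simp add: independent_columns_def)
  moreover have "\<forall>J. ?P J \<longrightarrow> card J < Suc (card C)"
    using assms(2) by (simp add: card_mono less_Suc_eq_le)
  ultimately obtain J where J: "?P J" and max: "\<And>J'. ?P J' \<Longrightarrow> card J' \<le> card J"
    using ex_has_greatest_nat[of ?P "{}" card "Suc (card C)"] by blast
  have "finite J"
    using J assms(2) finite_subset by blast
  have "card J \<le> card I"
    using independent_columns_card_le[OF assms(1) \<open>finite J\<close>] J by blast
  moreover have "\<not> card J < card I"
  proof
    assume "card J < card I"
    then obtain c where "c \<in> C - J" "independent_columns a I (insert c J)"
      using independent_columns_extend[OF assms(1) \<open>finite J\<close> assms(3)] J by blast
    with J have "?P (insert c J)" by blast
    then have "card (insert c J) \<le> card J" by (rule max)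
    then show False
      using \<open>finite J\<close> \<open>c \<in> C - J\<close> by simp
  qed
  ultimately show ?thesis
    using J by (intro exI[of _ J]) auto
qed

lemma card_lower_elements_less:
  fixes I :: "nat set"
  assumes "finite I" "i \<in> I"
  shows "card {a\<in>I. a < i} < card I"
proof (rule psubset_card_mono[OF assms(1)])
  have "i \<notin> {a\<in>I. a < i}"
    by simp
  with assms(2) show "{a\<in>I. a < i} \<subset> I"
    by blast
qed

lemma bij_betw_pick:
  assumes "finite I"
  shows "bij_betw (pick I) {..<card I} I"
  by (rule bij_betw_byWitness[where f' = "\<lambda>i. card {a\<in>I. a < i}"])
    (auto simp: card_pick_le pick_card_in_set pick_in_set_le card_lower_elements_less[OF assms])

lemma
  assumes "A \<in> carrier_mat m n" "I \<subseteq> {..<m}" "J \<subseteq> {..<n}"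
  shows submatrix_carrier_mat: "submatrix A I J \<in> carrier_mat (card I) (card J)"
    and submatrix_index_pick:
      "\<And>t r. t < card I \<Longrightarrow> r < card J \<Longrightarrow> submatrix A I J $$ (t, r) = A $$ (pick I t, pick J r)"
proof -
  have rows: "{i. i < dim_row A \<and> i \<in> I} = I" and cols: "{j. j < dim_col A \<and> j \<in> J} = J"
    using assms by auto
  show "submatrix A I J \<in> carrier_mat (card I) (card J)"
    unfolding carrier_mat_def using dim_submatrix[of A I J] rows cols by simp
  fix t r assume "t < card I" "r < card J"
  then show "submatrix A I J $$ (t, r) = A $$ (pick I t, pick J r)"
    using submatrix_index[of t A I r J] unfolding rows cols by simp
qed

lemma submatrix_mult_vec_index:
  assumes A: "A \<in> carrier_mat m n" and "I \<subseteq> {..<m}" "J \<subseteq> {..<n}"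
    and t: "t < card I" and v: "v \<in> carrier_vec (card J)"
  shows "(submatrix A I J *\<^sub>v v) $ t = (\<Sum>j\<in>J. A $$ (pick I t, j) * v $ card {a\<in>J. a < j})"
proof -
  have B: "submatrix A I J \<in> carrier_mat (card I) (card J)"
    using submatrix_carrier_mat assms by blast
  have "finite J"
    using \<open>J \<subseteq> {..<n}\<close> finite_subset by blast
  have "(submatrix A I J *\<^sub>v v) $ t = (\<Sum>r<card J. submatrix A I J $$ (t, r) * v $ r)"
    using B v t by (simp add: scalar_prod_def lessThan_atLeast0)
  also have "\<dots> = (\<Sum>r<card J. A $$ (pick I t, pick J r) * v $ r)"
    using submatrix_index_pick[OF assms(1-3) t] by simp
  also have "\<dots> = (\<Sum>r<card J. A $$ (pick I t, pick J r) * v $ card {a\<in>J. a < pick J r})"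
    by (simp add: card_pick_le)
  also have "\<dots> = (\<Sum>j\<in>J. A $$ (pick I t, j) * v $ card {a\<in>J. a < j})"
    using sum.reindex_bij_betw[OF bij_betw_pick[OF \<open>finite J\<close>],
        of "\<lambda>j. A $$ (pick I t, j) * v $ card {a\<in>J. a < j}"] by simp
  finally show ?thesis .
qed

lemma map_mat_submatrix: "map_mat f (submatrix A I J) = submatrix (map_mat f A) I J"
  by (rule eq_matI) (simp_all add: dim_submatrix submatrix_index pick_le)

lemma transpose_submatrix: "transpose_mat (submatrix A I J) = submatrix (transpose_mat A) J I"
  by (rule eq_matI) (simp_all add: dim_submatrix submatrix_index pick_le)

lemma transpose_mult_vec_index:
  assumes "A \<in> carrier_mat m n" "y \<in> carrier_vec m" "j < n"
  shows "(transpose_mat A *\<^sub>v y) $ j = (\<Sum>i<m. A $$ (i, j) * y $ i)"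
  using assms by (simp add: scalar_prod_def lessThan_atLeast0)

lemma replace_col_map_mat:
  assumes "dim_vec v = dim_row M"
  shows "map_mat f (replace_col M v k) = replace_col (map_mat f M) (map_vec f v) k"
  unfolding replace_col_def by (rule eq_matI) (use assms in auto)

lemma submatrix_transpose_mult_restriction:
  fixes A :: "'a::comm_ring_1 mat"
  assumes A: "A \<in> carrier_mat m n" and I: "I \<subseteq> {..<m}" and J: "J \<subseteq> {..<n}"
    and y: "y \<in> carrier_vec m" and y_outside: "\<forall>i<m. i \<notin> I \<longrightarrow> y $ i = 0"
  shows "submatrix (transpose_mat A) J I *\<^sub>v vec (card I) (\<lambda>t. y $ pick I t)
    = vec (card J) (\<lambda>r. (transpose_mat A *\<^sub>v y) $ pick J r)"
proof (rule eq_vecI)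
  have At: "transpose_mat A \<in> carrier_mat n m"
    using A by simp
  have "finite I"
    using I finite_subset by blast
  fix r assume "r < dim_vec (vec (card J) (\<lambda>r. (transpose_mat A *\<^sub>v y) $ pick J r))"
  then have r: "r < card J" by simp
  have "pick J r < n"
    using pick_in_set_le[OF r] J by auto
  have "(submatrix (transpose_mat A) J I *\<^sub>v vec (card I) (\<lambda>t. y $ pick I t)) $ r
      = (\<Sum>i\<in>I. transpose_mat A $$ (pick J r, i) * vec (card I) (\<lambda>t. y $ pick I t) $ card {a\<in>I. a < i})"
    by (rule submatrix_mult_vec_index[OF At J I r]) simp
  also have "\<dots> = (\<Sum>i\<in>I. A $$ (i, pick J r) * y $ i)"
  proof (rule sum.cong[OF refl])
    fix i assume "i \<in> I"
    then have "i < m" "card {a\<in>I. a < i} < card I"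
      using I card_lower_elements_less[OF \<open>finite I\<close>] by auto
    then show "transpose_mat A $$ (pick J r, i) * vec (card I) (\<lambda>t. y $ pick I t) $ card {a\<in>I. a < i}
        = A $$ (i, pick J r) * y $ i"
      using A \<open>pick J r < n\<close> pick_card_in_set[OF \<open>i \<in> I\<close>] by simp
  qed
  also have "\<dots> = (\<Sum>i<m. A $$ (i, pick J r) * y $ i)"
    using I y_outside by (intro sum.mono_neutral_left) auto
  also have "\<dots> = (transpose_mat A *\<^sub>v y) $ pick J r"
    using transpose_mult_vec_index[OF A y \<open>pick J r < n\<close>] by simp
  finally show "(submatrix (transpose_mat A) J I *\<^sub>v vec (card I) (\<lambda>t. y $ pick I t)) $ r
      = vec (card J) (\<lambda>r. (transpose_mat A *\<^sub>v y) $ pick J r) $ r"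
    using r by simp
next
  show "dim_vec (submatrix (transpose_mat A) J I *\<^sub>v vec (card I) (\<lambda>t. y $ pick I t))
      = dim_vec (vec (card J) (\<lambda>r. (transpose_mat A *\<^sub>v y) $ pick J r))"
    using submatrix_carrier_mat[of "transpose_mat A" n m J I] A I J by simp
qed

lemma det_submatrix_nonzero:
  fixes A :: "'a::field mat"
  assumes A: "A \<in> carrier_mat m n" and I: "I \<subseteq> {..<m}" and J: "J \<subseteq> {..<n}"
    and card: "card I = card J"
    and indep: "independent_columns (\<lambda>i j. A $$ (i, j)) I J"
  shows "det (submatrix A I J) \<noteq> 0"
proof
  assume "det (submatrix A I J) = 0"
  moreover have B: "submatrix A I J \<in> carrier_mat (card J) (card J)"
    using submatrix_carrier_mat[OF A I J] card by simp
  ultimately obtain v where v: "v \<in> carrier_vec (card J)" "v \<noteq> 0\<^sub>v (card J)"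
    and Bv: "submatrix A I J *\<^sub>v v = 0\<^sub>v (card J)"
    using det_0_iff_vec_prod_zero_field by blast
  have "finite I" "finite J"
    using I J finite_subset by blast+
  have "\<forall>i\<in>I. (\<Sum>j\<in>J. A $$ (i, j) * v $ card {a\<in>J. a < j}) = 0"
  proof
    fix i assume "i \<in> I"
    let ?t = "card {a\<in>I. a < i}"
    have t: "?t < card I"
      using card_lower_elements_less[OF \<open>finite I\<close> \<open>i \<in> I\<close>] .
    have "0 = (submatrix A I J *\<^sub>v v) $ ?t"
      using Bv t card by simp
    also have "\<dots> = (\<Sum>j\<in>J. A $$ (i, j) * v $ card {a\<in>J. a < j})"
      using submatrix_mult_vec_index[OF A I J t v(1)] pick_card_in_set[OF \<open>i \<in> I\<close>] by simp
    finally show "(\<Sum>j\<in>J. A $$ (i, j) * v $ card {a\<in>J. a < j}) = 0" by simp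
  qed
  then have "\<forall>j\<in>J. v $ card {a\<in>J. a < j} = 0"
    using indep[unfolded independent_columns_def, THEN spec, of "\<lambda>j. v $ card {a\<in>J. a < j}"] by blast
  then have "v = 0\<^sub>v (card J)"
    using v(1) pick_in_set_le[of _ J] card_pick_le[of _ J] by (intro eq_vecI) force+
  with v(2) show False by simp
qed

lemma cramer_integral:
  fixes Q :: "int mat" and x :: "'a::field vec"
  assumes Q: "Q \<in> carrier_mat s s" and x: "x \<in> carrier_vec s"
    and Qx: "map_mat of_int Q *\<^sub>v x = map_vec of_int c" and "t < s"
  shows "x $ t * of_int (det Q) = of_int (det (replace_col Q c t))"
proof -
  have "dim_vec c = s"
    using arg_cong[OF Qx, of dim_vec] Q by simp
  have "x $ t * of_int (det Q) = det (replace_col (map_mat of_int Q) (map_mat of_int Q *\<^sub>v x) t)"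
    using cramer_lemma_mat[of "map_mat of_int Q" s x t] Q x \<open>t < s\<close> by simp
  also have "replace_col (map_mat of_int Q) (map_mat of_int Q *\<^sub>v x) t = map_mat of_int (replace_col Q c t)"
    unfolding Qx using Q \<open>dim_vec c = s\<close> by (intro replace_col_map_mat[symmetric]) simp
  finally show ?thesis
    by (simp add: of_int_hom.hom_det)
qed

lemma cramer_submatrix_integral:
  fixes A :: "int mat" and y :: "real vec"
  assumes A: "A \<in> carrier_mat m n" and I: "I \<subseteq> {..<m}" and J: "J \<subseteq> {..<n}"
    and card: "card I = card J"
    and y: "y \<in> carrier_vec m" and y_outside: "\<forall>i<m. i \<notin> I \<longrightarrow> y $ i = 0"
    and eq: "transpose_mat (map_mat real_of_int A) *\<^sub>v y = map_vec real_of_int w"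
    and "i < m"
  shows "\<exists>N::int. y $ i * real_of_int (det (submatrix A I J)) = real_of_int N"
proof (cases "i \<in> I")
  case False
  then show ?thesis
    using y_outside \<open>i < m\<close> by (intro exI[of _ 0]) simp
next
  case True
  let ?s = "card I" and ?t = "card {a\<in>I. a < i}"
  define Q where "Q = submatrix (transpose_mat A) J I"
  define x where "x = vec ?s (\<lambda>t. y $ pick I t)"
  define wJ where "wJ = vec ?s (\<lambda>r. w $ pick J r)"
  have Q: "Q \<in> carrier_mat ?s ?s"
    using submatrix_carrier_mat[of "transpose_mat A" n m J I] A I J card by (simp add: Q_def)
  have "dim_vec w = n"
    using arg_cong[OF eq, of dim_vec] A by simp
  have Q_real: "map_mat real_of_int Q = submatrix (transpose_mat (map_mat real_of_int A)) J I"
    by (simp add: Q_def map_mat_submatrix map_mat_transpose)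
  have "map_mat real_of_int Q *\<^sub>v x = vec (card J) (\<lambda>r. map_vec real_of_int w $ pick J r)"
    unfolding Q_real x_def eq[symmetric] using A I J y y_outside
    by (intro submatrix_transpose_mult_restriction[of _ m n]) auto
  also have "\<dots> = map_vec real_of_int wJ"
    using pick_in_set_le[of _ J] J \<open>dim_vec w = n\<close> by (intro eq_vecI) (auto simp: wJ_def card subset_iff)
  finally have "map_mat real_of_int Q *\<^sub>v x = map_vec real_of_int wJ" .
  moreover have "?t < ?s"
    using I finite_subset card_lower_elements_less True by blast
  ultimately have "x $ ?t * real_of_int (det Q) = real_of_int (det (replace_col Q wJ ?t))"
    using Q by (intro cramer_integral) (auto simp: x_def)
  moreover have "x $ ?t = y $ i"
    using \<open>?t < ?s\<close> pick_card_in_set[OF True] by (simp add: x_def)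
  moreover have "det Q = det (submatrix A I J)"
    using det_transpose[of "submatrix A I J" "card I"] submatrix_carrier_mat[OF A I J] card
    by (simp add: Q_def transpose_submatrix[symmetric])
  ultimately show ?thesis
    by metis
qed

definition vec_support :: "'a::zero vec \<Rightarrow> nat set" where
  "vec_support y = {i. i < dim_vec y \<and> y $ i \<noteq> 0}"

lemma ratio_test:
  fixes y e :: "real vec"
  assumes y_nonneg: "\<forall>i<dim_vec y. 0 \<le> y $ i"
    and e_supp: "\<forall>i<dim_vec y. y $ i = 0 \<longrightarrow> e $ i = 0"
    and "i0 < dim_vec y" "0 < e $ i0"
  shows "\<exists>t>0. (\<forall>i<dim_vec y. t * e $ i \<le> y $ i) \<and> (\<exists>i<dim_vec y. 0 < e $ i \<and> t * e $ i = y $ i)"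
proof -
  define T where "T = {i. i < dim_vec y \<and> 0 < e $ i}"
  have "finite T" "i0 \<in> T"
    using assms(3,4) by (auto simp: T_def)
  define t where "t = Min ((\<lambda>i. y $ i / e $ i) ` T)"
  have "t \<in> (\<lambda>i. y $ i / e $ i) ` T"
    unfolding t_def using \<open>finite T\<close> \<open>i0 \<in> T\<close> by (intro Min_in) auto
  then obtain i1 where i1: "i1 < dim_vec y" "0 < e $ i1" and t: "t = y $ i1 / e $ i1"
    by (auto simp: T_def)
  have "y $ i1 \<noteq> 0"
    using e_supp i1 by force
  then have "0 < t"
    using y_nonneg i1 by (simp add: t less_le)
  moreover have "t * e $ i \<le> y $ i" if "i < dim_vec y" for i
  proof (cases "0 < e $ i")
    case True
    then have "t \<le> y $ i / e $ i"
      unfolding t_def using \<open>finite T\<close> that by (intro Min_le) (auto simp: T_def)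
    then show ?thesis
      using True by (simp add: pos_le_divide_eq)
  next
    case False
    then have "t * e $ i \<le> 0"
      using \<open>0 < t\<close> by (simp add: mult_nonneg_nonpos)
    also have "0 \<le> y $ i"
      using y_nonneg that by simp
    finally show ?thesis .
  qed
  moreover have "t * e $ i1 = y $ i1"
    using i1 by (simp add: t)
  ultimately show ?thesis
    using i1 by blast
qed

lemma exists_positive_step:
  fixes y e :: "real vec"
  assumes y_nonneg: "\<forall>i<dim_vec y. 0 \<le> y $ i"
    and e_supp: "\<forall>i<dim_vec y. y $ i = 0 \<longrightarrow> e $ i = 0"
  shows "\<exists>t>0. \<forall>i<dim_vec y. t * e $ i \<le> y $ i"
proof (cases "\<exists>i<dim_vec y. 0 < e $ i")
  case True
  then show ?thesis
    using ratio_test[OF assms] by blast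
next
  case False
  then have "\<forall>i<dim_vec y. 1 * e $ i \<le> y $ i"
    using y_nonneg by force
  then show ?thesis
    by (intro exI[of _ 1]) simp
qed

lemma dual_feasible_step:
  assumes feas: "dual_feasible A w y" and e: "e \<in> carrier_vec (dim_row A)"
    and ker: "transpose_mat (map_mat real_of_int A) *\<^sub>v e = 0\<^sub>v (dim_col A)"
    and step: "\<forall>i<dim_row A. t * e $ i \<le> y $ i"
  shows "dual_feasible A w (y - t \<cdot>\<^sub>v e)"
proof -
  let ?At = "transpose_mat (map_mat real_of_int A)"
  have y: "y \<in> carrier_vec (dim_row A)"
    using feas by (simp add: dual_feasible_def)
  have At: "?At \<in> carrier_mat (dim_col A) (dim_row A)"
    by simp
  have "?At *\<^sub>v (y - t \<cdot>\<^sub>v e) = ?At *\<^sub>v y - ?At *\<^sub>v (t \<cdot>\<^sub>v e)"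
    using e by (intro mult_minus_distrib_mat_vec[OF At y]) simp
  also have "?At *\<^sub>v (t \<cdot>\<^sub>v e) = t \<cdot>\<^sub>v (?At *\<^sub>v e)"
    by (rule mult_mat_vec[OF At e])
  also have "t \<cdot>\<^sub>v (?At *\<^sub>v e) = 0\<^sub>v (dim_col A)"
    unfolding ker by (rule eq_vecI) auto
  also have "?At *\<^sub>v y - 0\<^sub>v (dim_col A) = ?At *\<^sub>v y"
    by (intro minus_zero_vec mult_mat_vec_carrier[OF At y])
  also have "\<dots> = map_vec real_of_int w"
    using feas by (simp add: dual_feasible_def)
  finally show ?thesis
    using feas e step by (auto simp: dual_feasible_def)
qed

lemma mult_mat_vec_smult_eq_zero:
  fixes A :: "'a::field mat"
  assumes "A \<in> carrier_mat nr nc" "v \<in> carrier_vec nc" "A *\<^sub>v v = 0\<^sub>v nr"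
  shows "A *\<^sub>v (c \<cdot>\<^sub>v v) = 0\<^sub>v nr"
  using assms by (subst mult_mat_vec[of _ nr nc]) (auto intro!: eq_vecI)

lemma scalar_prod_minus_smult:
  fixes b y e :: "'a::comm_ring vec"
  assumes "b \<in> carrier_vec n" "y \<in> carrier_vec n" "e \<in> carrier_vec n"
  shows "b \<bullet> (y - t \<cdot>\<^sub>v e) = b \<bullet> y - t * (b \<bullet> e)"
  using assms by (subst scalar_prod_minus_distrib[of _ n]) auto

lemma dual_optimal_kernel_direction_orthogonal:
  assumes opt: "dual_optimal A b w y" and b: "b \<in> carrier_vec (dim_row A)"
    and e: "e \<in> carrier_vec (dim_row A)"
    and ker: "transpose_mat (map_mat real_of_int A) *\<^sub>v e = 0\<^sub>v (dim_col A)"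
    and e_supp: "\<forall>i<dim_row A. y $ i = 0 \<longrightarrow> e $ i = 0"
  shows "map_vec real_of_int b \<bullet> e = 0"
proof -
  have y: "y \<in> carrier_vec (dim_row A)" and y_nonneg: "\<forall>i<dim_row A. 0 \<le> y $ i"
    using opt by (auto simp: dual_optimal_def dual_feasible_def)
  have nonpos: "map_vec real_of_int b \<bullet> (c \<cdot>\<^sub>v e) \<le> 0" for c
  proof -
    have ker_c: "transpose_mat (map_mat real_of_int A) *\<^sub>v (c \<cdot>\<^sub>v e) = 0\<^sub>v (dim_col A)"
      using e ker by (intro mult_mat_vec_smult_eq_zero[of _ "dim_col A" "dim_row A"]) auto
    obtain t where "0 < t" and step: "\<forall>i<dim_row A. t * (c \<cdot>\<^sub>v e) $ i \<le> y $ i"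
      using exists_positive_step[of y "c \<cdot>\<^sub>v e"] y y_nonneg e_supp e by auto
    have "dual_feasible A w (y - t \<cdot>\<^sub>v (c \<cdot>\<^sub>v e))"
      using opt e ker_c step by (intro dual_feasible_step) (auto simp: dual_optimal_def)
    then have "map_vec real_of_int b \<bullet> y \<le> map_vec real_of_int b \<bullet> (y - t \<cdot>\<^sub>v (c \<cdot>\<^sub>v e))"
      using opt unfolding dual_optimal_def by blast
    then have "t * (map_vec real_of_int b \<bullet> (c \<cdot>\<^sub>v e)) \<le> 0"
      using scalar_prod_minus_smult[of "map_vec real_of_int b" "dim_row A" y "c \<cdot>\<^sub>v e" t] b y e by simp
    with \<open>0 < t\<close> show ?thesis
      by (simp add: mult_le_0_iff)
  qed
  from nonpos[of 1] nonpos[of "-1"] show ?thesis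
    using b e by simp
qed

lemma dual_optimal_step:
  assumes opt: "dual_optimal A b w y" and b: "b \<in> carrier_vec (dim_row A)"
    and e: "e \<in> carrier_vec (dim_row A)"
    and ker: "transpose_mat (map_mat real_of_int A) *\<^sub>v e = 0\<^sub>v (dim_col A)"
    and e_supp: "\<forall>i<dim_row A. y $ i = 0 \<longrightarrow> e $ i = 0"
    and step: "\<forall>i<dim_row A. t * e $ i \<le> y $ i"
  shows "dual_optimal A b w (y - t \<cdot>\<^sub>v e)"
proof -
  have y: "y \<in> carrier_vec (dim_row A)"
    using opt by (simp add: dual_optimal_def dual_feasible_def)
  have "dual_feasible A w (y - t \<cdot>\<^sub>v e)"
    using opt e ker step by (intro dual_feasible_step) (auto simp: dual_optimal_def)
  moreover have "map_vec real_of_int b \<bullet> (y - t \<cdot>\<^sub>v e) = map_vec real_of_int b \<bullet> y"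
    using scalar_prod_minus_smult[of "map_vec real_of_int b" "dim_row A" y e t] b y e
      dual_optimal_kernel_direction_orthogonal[OF opt b e ker e_supp]
    by simp
  ultimately show ?thesis
    using opt by (simp add: dual_optimal_def)
qed

lemma minimal_support_kernel_trivial:
  assumes A: "A \<in> carrier_mat m n" and b: "b \<in> carrier_vec m" and opt: "dual_optimal A b w y"
    and minimal: "\<forall>y'. dual_optimal A b w y' \<longrightarrow> card (vec_support y) \<le> card (vec_support y')"
    and d: "d \<in> carrier_vec m" and d_supp: "\<forall>i<m. y $ i = 0 \<longrightarrow> d $ i = 0"
    and ker: "transpose_mat (map_mat real_of_int A) *\<^sub>v d = 0\<^sub>v n"
  shows "d = 0\<^sub>v m"
proof (rule ccontr)
  assume "d \<noteq> 0\<^sub>v m"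
  then obtain i0 where "i0 < m" "d $ i0 \<noteq> 0"
    using d by (metis carrier_vecD eq_vecI index_zero_vec)
  define e where "e = (if 0 < d $ i0 then 1 else -1) \<cdot>\<^sub>v d"
  have e: "e \<in> carrier_vec m" and "0 < e $ i0" and e_supp: "\<forall>i<m. y $ i = 0 \<longrightarrow> e $ i = 0"
    using d d_supp \<open>i0 < m\<close> \<open>d $ i0 \<noteq> 0\<close> by (auto simp: e_def)
  have ker_e: "transpose_mat (map_mat real_of_int A) *\<^sub>v e = 0\<^sub>v n"
    unfolding e_def using A d ker by (intro mult_mat_vec_smult_eq_zero[of _ n m]) auto
  have y: "y \<in> carrier_vec m" and y_nonneg: "\<forall>i<m. 0 \<le> y $ i"
    using opt A by (auto simp: dual_optimal_def dual_feasible_def)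
  obtain t i1 where step: "\<forall>i<m. t * e $ i \<le> y $ i"
    and "i1 < m" "0 < e $ i1" and tight: "t * e $ i1 = y $ i1"
    using ratio_test[of y e i0] y y_nonneg e_supp \<open>i0 < m\<close> \<open>0 < e $ i0\<close> by auto
  define y' where "y' = y - t \<cdot>\<^sub>v e"
  have "dual_optimal A b w y'"
    unfolding y'_def using opt A b e ker_e e_supp step by (intro dual_optimal_step) auto
  moreover have "vec_support y' \<subset> vec_support y"
  proof
    show "vec_support y' \<subseteq> vec_support y"
      using y e e_supp by (auto simp: vec_support_def y'_def)
    have "i1 \<in> vec_support y" "i1 \<notin> vec_support y'"
      using y e e_supp \<open>i1 < m\<close> \<open>0 < e $ i1\<close> tight by (auto simp: vec_support_def y'_def)
    then show "vec_support y' \<noteq> vec_support y"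
      by blast
  qed
  then have "card (vec_support y') < card (vec_support y)"
    by (intro psubset_card_mono) (auto simp: vec_support_def)
  ultimately show False
    using minimal by fastforce
qed

lemma minimal_support_rows_independent:
  assumes A: "A \<in> carrier_mat m n" and b: "b \<in> carrier_vec m" and opt: "dual_optimal A b w y"
    and minimal: "\<forall>y'. dual_optimal A b w y' \<longrightarrow> card (vec_support y) \<le> card (vec_support y')"
  shows "independent_columns (\<lambda>j i. map_mat real_of_int A $$ (i, j)) {..<n} (vec_support y)"
  unfolding independent_columns_def
proof (intro allI impI)
  let ?S = "vec_support y"
  fix u assume u: "\<forall>j\<in>{..<n}. (\<Sum>i\<in>?S. map_mat real_of_int A $$ (i, j) * u i) = 0"
  have y: "y \<in> carrier_vec m"
    using opt A by (simp add: dual_optimal_def dual_feasible_def)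
  then have S: "?S \<subseteq> {..<m}"
    by (auto simp: vec_support_def)
  define d where "d = vec m (\<lambda>i. if i \<in> ?S then u i else 0)"
  have ker: "transpose_mat (map_mat real_of_int A) *\<^sub>v d = 0\<^sub>v n"
  proof (rule eq_vecI)
    fix j assume "j < dim_vec (0\<^sub>v n :: real vec)"
    then have j: "j < n" by simp
    have "(transpose_mat (map_mat real_of_int A) *\<^sub>v d) $ j
        = (\<Sum>i<m. map_mat real_of_int A $$ (i, j) * d $ i)"
      using A j by (intro transpose_mult_vec_index) (auto simp: d_def)
    also have "\<dots> = (\<Sum>i\<in>?S. map_mat real_of_int A $$ (i, j) * u i)"
      using S by (intro sum.mono_neutral_cong_right) (auto simp: d_def)
    finally show "(transpose_mat (map_mat real_of_int A) *\<^sub>v d) $ j = 0\<^sub>v n $ j"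
      using u j by simp
  qed (use A in simp)
  have "\<forall>i<m. y $ i = 0 \<longrightarrow> d $ i = 0"
    by (simp add: d_def vec_support_def)
  then have "d = 0\<^sub>v m"
    by (intro minimal_support_kernel_trivial[OF A b opt minimal _ _ ker]) (simp add: d_def)
  show "\<forall>i\<in>?S. u i = 0"
  proof
    fix i assume "i \<in> ?S"
    with S have "u i = d $ i"
      by (auto simp: d_def)
    also have "\<dots> = 0"
      using \<open>i \<in> ?S\<close> S \<open>d = 0\<^sub>v m\<close> by auto
    finally show "u i = 0" .
  qed
qed

lemma minimal_support_nonsingular_submatrix:
  assumes A: "A \<in> carrier_mat m n" and b: "b \<in> carrier_vec m" and opt: "dual_optimal A b w y"
    and minimal: "\<forall>y'. dual_optimal A b w y' \<longrightarrow> card (vec_support y) \<le> card (vec_support y')"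
  shows "\<exists>J\<subseteq>{..<n}. card J = card (vec_support y) \<and> det (submatrix A (vec_support y) J) \<noteq> 0"
proof -
  let ?S = "vec_support y" and ?Ar = "map_mat real_of_int A"
  have "y \<in> carrier_vec m"
    using opt A by (simp add: dual_optimal_def dual_feasible_def)
  then have S: "?S \<subseteq> {..<m}" "finite ?S"
    by (auto simp: vec_support_def)
  obtain J where J: "J \<subseteq> {..<n}" "card J = card ?S"
    and indep: "independent_columns (\<lambda>i j. ?Ar $$ (i, j)) ?S J"
    using independent_rows_imp_square_subsystem[OF S(2) _ minimal_support_rows_independent[OF A b opt minimal]]
    by blast
  have "det (submatrix ?Ar ?S J) \<noteq> 0"
    using A J(2) by (intro det_submatrix_nonzero[OF _ S(1) J(1) _ indep]) auto
  then have "det (submatrix A ?S J) \<noteq> 0"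
    by (simp add: map_mat_submatrix[symmetric])
  with J show ?thesis
    by blast
qed

lemma p_adic_vec_if_det_scaled:
  assumes "p \<noteq> 0" and det: "d = p ^ k \<or> d = - (p ^ k)"
    and scaled: "\<forall>i<dim_vec y. \<exists>N::int. y $ i * real_of_int d = real_of_int N"
  shows "p_adic_vec p y"
  unfolding p_adic_vec_def p_adic_def
proof (intro allI impI)
  fix i assume "i < dim_vec y"
  then obtain N where N: "y $ i * real_of_int d = real_of_int N"
    using scaled by blast
  have "real_of_int p ^ k \<noteq> 0"
    using \<open>p \<noteq> 0\<close> by simp
  from det have "y $ i = real_of_int (if d = p ^ k then N else - N) / real_of_int p ^ k"
    using N \<open>real_of_int p ^ k \<noteq> 0\<close> by (auto simp: eq_divide_eq)
  then show "\<exists>a k. y $ i = real_of_int a / real_of_int p ^ k"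
    by blast
qed

theorem theorem1p7:
  fixes p :: int and A :: "int mat" and b :: "int vec" and m n :: nat
  assumes "prime p"
    and "A \<in> carrier_mat m n"
    and "b \<in> carrier_vec m"
    and "subdets_p_power p A"
  shows "totally_dual_p_adic p A b"
  unfolding totally_dual_p_adic_def
proof (intro ballI impI)
  fix w :: "int vec"
  assume "\<exists>y. dual_optimal A b w y"
  then obtain y where opt: "dual_optimal A b w y"
    and minimal: "\<forall>y'. dual_optimal A b w y' \<longrightarrow> card (vec_support y) \<le> card (vec_support y')"
    using ex_has_least_nat[of "dual_optimal A b w" _ "\<lambda>y. card (vec_support y)"] by blast
  let ?S = "vec_support y"
  have y: "y \<in> carrier_vec m" and eq: "transpose_mat (map_mat real_of_int A) *\<^sub>v y = map_vec real_of_int w"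
    using opt assms(2) by (auto simp: dual_optimal_def dual_feasible_def)
  then have S: "?S \<subseteq> {..<m}" and outside: "\<forall>i<m. i \<notin> ?S \<longrightarrow> y $ i = 0"
    by (auto simp: vec_support_def)
  obtain J where J: "J \<subseteq> {..<n}" "card J = card ?S" and "det (submatrix A ?S J) \<noteq> 0"
    using minimal_support_nonsingular_submatrix[OF assms(2,3) opt minimal] by blast
  moreover have "?S \<subseteq> {0..<dim_row A}" "J \<subseteq> {0..<dim_col A}" "card ?S = card J"
    using assms(2) S J by auto
  ultimately obtain k where k: "det (submatrix A ?S J) = p ^ k \<or> det (submatrix A ?S J) = - (p ^ k)"
    using assms(4) unfolding subdets_p_power_def Let_def by blast
  have "p \<noteq> 0"
    using \<open>prime p\<close> by auto
  moreover have "\<forall>i<dim_vec y. \<exists>N::int. y $ i * real_of_int (det (submatrix A ?S J)) = real_of_int N"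
    using cramer_submatrix_integral[OF assms(2) S J(1) J(2)[symmetric] y outside eq] y by simp
  ultimately have "p_adic_vec p y"
    using p_adic_vec_if_det_scaled k by blast
  with opt show "\<exists>y. dual_optimal A b w y \<and> p_adic_vec p y"
    by blast
qed

end
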